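(* Let $l\in\mathbb N$, $V_{l+1}=\{v_1,\dots,v_{l+1}\}$ and $B\subset V_{l+1}$ with $b:=\#B$. The number of balanced trees $T\in\mathcal T_{V_{l+1}}$ with $B(T)=B$ is $0$ if $b\in\{0,l+1\}$, and otherwise $$\#\{T\in\mathcal T_{V_{l+1}}\mid B(T)=B\}=l!\binom{l-1}{b-1}.$$
   Context: For a finite vertex set $V$ and $N\ge1$, a route through $V$ of length $N$ is a sequence $\mathbf i=(i_1,\dots,i_N)\in V^N$ whose set of entries equals $V$; its circuit multigraph $G_{\mathbf i}$ has vertex set $V$ and edges $1,\dots,N$, edge $k<N$ from $i_k$ to $i_{k+1}$, edge $N$ from $i_N$ to $i_1$; $\mathcal C_{V,N}$ is the set of these, each identified with its route. A directed multigraph is balanced if its edges split into pairs $(e,e')$ with the head of $e$ the tail of $e'$ and vice versa. $\mathcal T_{V_{l+1}}$ is the set of balanced $G\in\mathcal C_{V_{l+1},2l}$. The black vertices are $B(G_{\mathbf i})=\{i_t:t\text{ odd}\}$. *)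

theory Defs
  imports Main
begin

text \<open>A route of length N through V is a list i of length N (positions 0..N-1 correspond
to the paper's 1..N) whose set of entries is V.  The circuit multigraph G_i is identified
with its route: edge k (0 \<le> k < N) goes from i!k to i!((k+1) mod N).\<close>

definition circuits :: "'a set \<Rightarrow> nat \<Rightarrow> 'a list set" where
  "circuits V N = {i. N \<ge> 1 \<and> length i = N \<and> set i = V}"

definition edge_tail :: "'a list \<Rightarrow> nat \<Rightarrow> 'a" where
  "edge_tail i k = i ! k"

definition edge_head :: "'a list \<Rightarrow> nat \<Rightarrow> 'a" where
  "edge_head i k = i ! ((k + 1) mod length i)"

text \<open>Balanced: the edges split into pairs (e,e') (a fixed-point-free involution on the
edge set) with head e = tail e' and tail e = head e'.\<close>

definition balanced :: "'a list \<Rightarrow> bool" where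
  "balanced i \<longleftrightarrow> (\<exists>\<sigma> :: nat \<Rightarrow> nat. \<forall>e < length i.
      \<sigma> e < length i \<and> \<sigma> e \<noteq> e \<and> \<sigma> (\<sigma> e) = e \<and>
      edge_head i e = edge_tail i (\<sigma> e) \<and> edge_tail i e = edge_head i (\<sigma> e))"

definition balanced_trees :: "'a set \<Rightarrow> nat \<Rightarrow> 'a list set" where
  "balanced_trees V l = {i \<in> circuits V (2 * l). balanced i}"

text \<open>Black vertices: entries at odd 1-based positions, i.e. even 0-based positions.\<close>

definition black :: "'a list \<Rightarrow> 'a set" where
  "black i = {i ! t | t. t < length i \<and> even t}"

end

theory Submission
  imports Defs
begin

text \<open>Closing a balanced route T of length 2l through l+1 vertices to T @ [hd T] gives a
  walk around a tree on V that traverses every edge once in each direction; its even positions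
  visit one colour class of the tree.  Such walks arise by repeatedly inserting a leaf y next
  to a visit of its neighbour x, i.e. a spike x, y, x.  Classifying walks with root r by the
  number d v of visits of every vertex v, removal of a leaf gives a recursion whose solution is
  (w - 1)! (b - 1)! (d r - 1), where b and w are the sizes of the two colour classes.  The degree
  vectors on the two classes are compositions of l into b and w positive parts, and summing
  over roots and degrees gives (w - 1)! (b - 1)! l C(l - 1, b - 1) C(l - 1, w - 1), which is
  l! C(l - 1, b - 1).\<close>

lemma count_list_conv_card_indices:
  "count_list xs x = card {i. i < length xs \<and> xs ! i = x}"
proof -
  have "{i. i < length xs \<and> xs ! i = x} = {i. i < length xs \<and> x = xs ! i}" by auto
  then show ?thesis by (simp add: count_list_eq_length_filter length_filter_conv_card)
qed

lemma count_list_ge_2: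
  assumes "i \<noteq> j" "i < length xs" "j < length xs" "xs ! i = x" "xs ! j = x"
  shows "count_list xs x \<ge> 2"
proof -
  have "card {i, j} \<le> card {i. i < length xs \<and> xs ! i = x}"
    using assms by (intro card_mono) auto
  then show ?thesis using assms(1) by (simp add: count_list_conv_card_indices)
qed

lemma count_list_1_index_unique:
  assumes "count_list xs x = 1" "i < length xs" "j < length xs" "xs ! i = x" "xs ! j = x"
  shows "i = j"
  using count_list_ge_2[of i j xs x] assms by (cases "i = j") auto

section \<open>Spikes\<close>

definition remove_spike :: "'a list \<Rightarrow> nat \<Rightarrow> 'a list" where
  "remove_spike L k = take k L @ drop (k + 2) L"

definition insert_spike :: "'a list \<Rightarrow> nat \<Rightarrow> 'a \<Rightarrow> 'a list" where
  "insert_spike L j y = take (Suc j) L @ [y, L ! j] @ drop (Suc j) L"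

lemma length_remove_spike: "k + 2 \<le> length L \<Longrightarrow> length (remove_spike L k) = length L - 2"
  by (simp add: remove_spike_def)

lemma nth_remove_spike:
  "k + 2 \<le> length L \<Longrightarrow> i < length L - 2 \<Longrightarrow>
   remove_spike L k ! i = L ! (if i < k then i else i + 2)"
  by (auto simp: remove_spike_def nth_append min_def)

lemma length_insert_spike [simp]: "j < length L \<Longrightarrow> length (insert_spike L j y) = length L + 2"
  by (simp add: insert_spike_def)

lemma nth_insert_spike:
  assumes "j < length L" "i < length L + 2"
  shows "insert_spike L j y ! i =
    (if i \<le> j then L ! i else if i = Suc j then y else if i = Suc (Suc j) then L ! j else L ! (i - 2))"
proof -
  have "\<not> i \<le> j \<Longrightarrow> i \<noteq> Suc j \<Longrightarrow> i \<noteq> Suc (Suc j) \<Longrightarrow> Suc (i - 3) = i - 2" by arith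
  then show ?thesis
    using assms by (auto simp: insert_spike_def nth_append min_def nth_Cons' split: if_splits)
qed

lemma remove_insert_spike: "j < length L \<Longrightarrow> remove_spike (insert_spike L j y) (Suc j) = L"
  by (simp add: insert_spike_def remove_spike_def)

lemma insert_remove_spike:
  assumes "0 < k" "k + 2 \<le> length L" "L ! (k - 1) = L ! (k + 1)"
  shows "insert_spike (remove_spike L k) (k - 1) (L ! k) = L"
proof (rule nth_equalityI)
  have k: "k - 1 < length (remove_spike L k)" using assms by (simp add: length_remove_spike)
  then show "length (insert_spike (remove_spike L k) (k - 1) (L ! k)) = length L"
    using assms by (simp add: length_remove_spike)
  fix i assume "i < length (insert_spike (remove_spike L k) (k - 1) (L ! k))"
  then have i: "i < length L" using assms k by (simp add: length_remove_spike)
  have "\<not> i < k \<Longrightarrow> i \<noteq> k \<Longrightarrow> i \<noteq> Suc k \<Longrightarrow> Suc (Suc (i - 2)) = i" by arith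
  then show "insert_spike (remove_spike L k) (k - 1) (L ! k) ! i = L ! i"
    using assms i k by (auto simp: nth_insert_spike nth_remove_spike length_remove_spike)
qed

lemma set_insert_spike: "j < length L \<Longrightarrow> set (insert_spike L j y) = insert y (set L)"
  by (auto simp: insert_spike_def dest: in_set_takeD in_set_dropD)
    (metis append_take_drop_id Un_iff set_append)

lemma count_list_insert_spike:
  "j < length L \<Longrightarrow> count_list (insert_spike L j y) v =
     count_list L v + (if v = y then 1 else 0) + (if v = L ! j then 1 else 0)"
  by (simp add: insert_spike_def) (metis append_take_drop_id count_list_append)

lemma hd_insert_spike: "j < length L \<Longrightarrow> hd (insert_spike L j y) = hd L"
  by (cases L) (auto simp: insert_spike_def)

lemma last_insert_spike:
  assumes "j < length L"
  shows "last (insert_spike L j y) = last L"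
proof (cases "Suc j < length L")
  case True
  then show ?thesis by (simp add: insert_spike_def last_append)
next
  case False
  then have "j = length L - 1" "L \<noteq> []" using assms by auto
  then show ?thesis by (simp add: insert_spike_def last_conv_nth nth_append)
qed

definition spike_origin :: "nat \<Rightarrow> nat \<Rightarrow> nat" where
  "spike_origin j i = (if i \<le> j then i else if i = Suc (Suc j) then j else i - 2)"

lemma spike_origin:
  assumes "j < length L" "i < length (insert_spike L j y)" "i \<noteq> Suc j"
  shows "spike_origin j i < length L" "L ! spike_origin j i = insert_spike L j y ! i"
    "even (spike_origin j i) \<longleftrightarrow> even i"
  using assms by (auto simp: spike_origin_def nth_insert_spike)

lemma insert_spike_inj:
  assumes j: "j1 < length L1" "j2 < length L2" and y: "y \<notin> set L1"
    and eq: "insert_spike L1 j1 y = insert_spike L2 j2 y"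
  shows "L1 = L2" "j1 = j2"
proof -
  have "L1 ! j1 \<noteq> y" using j(1) y nth_mem by metis
  then have once: "count_list (insert_spike L1 j1 y) y = 1"
    using count_list_insert_spike[OF j(1), of y y] y by (simp add: count_list_0_iff)
  have "length L1 + 2 = length L2 + 2" by (metis eq j length_insert_spike)
  then have len: "length L1 = length L2" by simp
  have "insert_spike L1 j1 y ! Suc j1 = y" using j(1) by (simp add: nth_insert_spike)
  moreover have "insert_spike L1 j1 y ! Suc j2 = y" unfolding eq
    using j(2) by (simp add: nth_insert_spike)
  ultimately show "j1 = j2"
    using count_list_1_index_unique[OF once, of "Suc j1" "Suc j2"] j len by simp
  then show "L1 = L2" using remove_insert_spike j eq by metis
qed

section \<open>Balanced walks and tree walks\<close>

definition reversal_pairing :: "'a list \<Rightarrow> (nat \<Rightarrow> nat) \<Rightarrow> bool" where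
  "reversal_pairing L \<sigma> \<longleftrightarrow> (\<forall>e < length L - 1.
      \<sigma> e < length L - 1 \<and> \<sigma> e \<noteq> e \<and> \<sigma> (\<sigma> e) = e \<and>
      L ! Suc e = L ! \<sigma> e \<and> L ! e = L ! Suc (\<sigma> e))"

definition balanced_walk :: "'a list \<Rightarrow> bool" where
  "balanced_walk L \<longleftrightarrow> (\<exists>\<sigma>. reversal_pairing L \<sigma>)"

lemma reversal_pairingD:
  assumes "reversal_pairing L \<sigma>" "e < length L - 1"
  shows "\<sigma> e < length L - 1" "\<sigma> e \<noteq> e" "\<sigma> (\<sigma> e) = e"
    "L ! Suc e = L ! \<sigma> e" "L ! e = L ! Suc (\<sigma> e)"
  using assms unfolding reversal_pairing_def by blast+

lemma nth_remove_spike_step: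
  assumes "0 < k" "k + 2 \<le> length L" "L ! (k - 1) = L ! (k + 1)" "e < length L - 3"
  shows "remove_spike L k ! e = L ! (if e < k - 1 then e else e + 2)"
    and "remove_spike L k ! Suc e = L ! Suc (if e < k - 1 then e else e + 2)"
  using assms by (cases "e = k - 1"; auto simp: nth_remove_spike)+

lemma balanced_walk_of_remove_spike:
  assumes k: "0 < k" "k + 2 \<le> length L" and spike: "L ! (k - 1) = L ! (k + 1)"
    and bal: "balanced_walk (remove_spike L k)"
  shows "balanced_walk L"
proof -
  obtain \<sigma>' where \<sigma>': "reversal_pairing (remove_spike L k) \<sigma>'"
    using bal by (auto simp: balanced_walk_def)
  have len: "length (remove_spike L k) - 1 = length L - 3"
    using k by (simp add: length_remove_spike)
  define \<phi> where "\<phi> e = (if e < k - 1 then e else e + 2)" for e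
  define \<psi> where "\<psi> e = (if e < k - 1 then e else e - 2)" for e
  define \<sigma> where "\<sigma> e = (if e = k - 1 then k else if e = k then k - 1 else \<phi> (\<sigma>' (\<psi> e)))" for e
  have step: "remove_spike L k ! e = L ! \<phi> e" "remove_spike L k ! Suc e = L ! Suc (\<phi> e)"
    if "e < length L - 3" for e
    using nth_remove_spike_step[OF k spike that] by (simp_all add: \<phi>_def)
  have \<phi>_inj: "\<phi> a = \<phi> b \<Longrightarrow> a = b" for a b by (auto simp: \<phi>_def split: if_splits)
  have \<sigma>_spike: "\<sigma> (k - 1) = k" "\<sigma> k = k - 1" using k by (simp_all add: \<sigma>_def)
  have \<sigma>_other: "\<sigma> e = \<phi> (\<sigma>' (\<psi> e))" if "e \<noteq> k - 1" "e \<noteq> k" for e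
    using that by (simp add: \<sigma>_def)
  have "reversal_pairing L \<sigma>" unfolding reversal_pairing_def
  proof (intro allI impI)
    fix e assume e: "e < length L - 1"
    show "\<sigma> e < length L - 1 \<and> \<sigma> e \<noteq> e \<and> \<sigma> (\<sigma> e) = e \<and> L ! Suc e = L ! \<sigma> e \<and> L ! e = L ! Suc (\<sigma> e)"
    proof (cases "e = k - 1 \<or> e = k")
      case True
      then show ?thesis using k spike \<sigma>_spike by auto
    next
      case False
      let ?e = "\<psi> e"
      have e': "?e < length L - 3" "\<phi> ?e = e" using False e k by (auto simp: \<psi>_def \<phi>_def)
      have p: "\<sigma>' ?e < length L - 3" "\<sigma>' ?e \<noteq> ?e" "\<sigma>' (\<sigma>' ?e) = ?e"
        "remove_spike L k ! Suc ?e = remove_spike L k ! \<sigma>' ?e"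
        "remove_spike L k ! ?e = remove_spike L k ! Suc (\<sigma>' ?e)"
        using reversal_pairingD[OF \<sigma>', of ?e] e'(1) len by simp_all
      have \<sigma>e: "\<sigma> e = \<phi> (\<sigma>' ?e)" using False \<sigma>_other by simp
      have \<phi>\<sigma>': "\<phi> (\<sigma>' ?e) \<noteq> k - 1" "\<phi> (\<sigma>' ?e) \<noteq> k" "\<psi> (\<phi> (\<sigma>' ?e)) = \<sigma>' ?e"
        "\<phi> (\<sigma>' ?e) < length L - 1"
        using p(1) k by (auto simp: \<phi>_def \<psi>_def)
      have "\<sigma> (\<sigma> e) = e" using \<phi>\<sigma>'(1-3) p(3) e'(2) \<sigma>_other \<sigma>e by simp
      moreover have "\<sigma> e \<noteq> e" using \<sigma>e p(2) e'(2) \<phi>_inj by metis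
      moreover have "L ! Suc e = L ! \<sigma> e" "L ! e = L ! Suc (\<sigma> e)"
        using step[OF e'(1)] step[OF p(1)] p(4,5) e'(2) \<sigma>e by metis+
      ultimately show ?thesis using \<phi>\<sigma>'(4) \<sigma>e by simp
    qed
  qed
  then show ?thesis by (auto simp: balanced_walk_def)
qed

lemma balanced_walk_remove_spike:
  assumes k: "0 < k" "k + 2 \<le> length L" and \<sigma>: "reversal_pairing L \<sigma>" and \<sigma>k: "\<sigma> (k - 1) = k"
  shows "L ! (k - 1) = L ! (k + 1)" and "balanced_walk (remove_spike L k)"
proof -
  have k1: "k - 1 < length L - 1" using k by simp
  show spike: "L ! (k - 1) = L ! (k + 1)" using reversal_pairingD[OF \<sigma> k1] \<sigma>k k by simp
  have \<sigma>k': "\<sigma> k = k - 1" using reversal_pairingD(3)[OF \<sigma> k1] \<sigma>k by simp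
  have len: "length (remove_spike L k) - 1 = length L - 3"
    using k by (simp add: length_remove_spike)
  define \<phi> where "\<phi> e = (if e < k - 1 then e else e + 2)" for e
  define \<psi> where "\<psi> e = (if e < k - 1 then e else e - 2)" for e
  have step: "remove_spike L k ! e = L ! \<phi> e" "remove_spike L k ! Suc e = L ! Suc (\<phi> e)"
    if "e < length L - 3" for e
    using nth_remove_spike_step[OF k spike that] by (simp_all add: \<phi>_def)
  have \<psi>\<phi>: "\<psi> (\<phi> x) = x" for x by (simp add: \<phi>_def \<psi>_def)
  have "reversal_pairing (remove_spike L k) (\<lambda>e. \<psi> (\<sigma> (\<phi> e)))"
    unfolding reversal_pairing_def len
  proof (intro allI impI)
    fix e assume e: "e < length L - 3"
    have \<phi>e: "\<phi> e < length L - 1" "\<phi> e \<noteq> k - 1" "\<phi> e \<noteq> k" using e k by (auto simp: \<phi>_def)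
    have p: "\<sigma> (\<phi> e) < length L - 1" "\<sigma> (\<phi> e) \<noteq> \<phi> e" "\<sigma> (\<sigma> (\<phi> e)) = \<phi> e"
        "L ! Suc (\<phi> e) = L ! \<sigma> (\<phi> e)" "L ! \<phi> e = L ! Suc (\<sigma> (\<phi> e))"
      using reversal_pairingD[OF \<sigma> \<phi>e(1)] by simp_all
    have "\<sigma> (\<phi> e) \<noteq> k - 1" "\<sigma> (\<phi> e) \<noteq> k" using p(3) \<sigma>k \<sigma>k' \<phi>e by metis+
    then have \<phi>\<psi>: "\<phi> (\<psi> (\<sigma> (\<phi> e))) = \<sigma> (\<phi> e)" and \<psi>\<sigma>: "\<psi> (\<sigma> (\<phi> e)) < length L - 3"
      using p(1) k by (auto simp: \<phi>_def \<psi>_def)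
    then show "\<psi> (\<sigma> (\<phi> e)) < length L - 3 \<and> \<psi> (\<sigma> (\<phi> e)) \<noteq> e \<and>
          \<psi> (\<sigma> (\<phi> (\<psi> (\<sigma> (\<phi> e))))) = e \<and>
          remove_spike L k ! Suc e = remove_spike L k ! \<psi> (\<sigma> (\<phi> e)) \<and>
          remove_spike L k ! e = remove_spike L k ! Suc (\<psi> (\<sigma> (\<phi> e)))"
      using p step[OF e] step[OF \<psi>\<sigma>] \<phi>\<psi> \<psi>\<phi> \<psi>\<sigma> by metis
  qed
  then show "balanced_walk (remove_spike L k)" by (auto simp: balanced_walk_def)
qed

text \<open>Tree walks are the closed walks T @ [hd T] of the balanced routes T of length 2l through
  l+1 vertices.\<close>

definition tree_walk :: "'a list \<Rightarrow> bool" where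
  "tree_walk L \<longleftrightarrow> L \<noteq> [] \<and> hd L = last L \<and> length L + 1 = 2 * card (set L) \<and> balanced_walk L"

definition even_entries :: "'a list \<Rightarrow> 'a set" where
  "even_entries L = {L ! t | t. t < length L \<and> even t}"

lemma even_entries_subset_set: "even_entries L \<subseteq> set L"
  by (auto simp: even_entries_def)

lemma tree_walk_singleton: "tree_walk [r]"
  by (simp add: tree_walk_def balanced_walk_def reversal_pairing_def)

lemma tree_walk_insert_spike:
  assumes L: "tree_walk L" and y: "y \<notin> set L" and j: "j < length L"
  shows "tree_walk (insert_spike L j y)"
proof -
  have "balanced_walk (insert_spike L j y)"
    by (rule balanced_walk_of_remove_spike[of "Suc j"])
      (use j L in \<open>simp_all add: nth_insert_spike remove_insert_spike tree_walk_def\<close>)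
  moreover have "card (set (insert_spike L j y)) = Suc (card (set L))"
    using set_insert_spike[OF j] y by simp
  ultimately show ?thesis
    using L j
      by (auto simp: tree_walk_def hd_insert_spike last_insert_spike simp flip: length_greater_0_conv)
qed

lemma even_entries_insert_spike:
  assumes j: "j < length L"
  shows "even_entries (insert_spike L j y) =
    (if even j then even_entries L else insert y (even_entries L))"
proof -
  have "x \<in> even_entries (insert_spike L j y) \<longleftrightarrow> x \<in> even_entries L \<or> (odd j \<and> x = y)" for x
  proof
    assume "x \<in> even_entries (insert_spike L j y)"
    then obtain t where t: "t < length L + 2" "even t" "x = insert_spike L j y ! t"
      using j by (auto simp: even_entries_def)
    show "x \<in> even_entries L \<or> (odd j \<and> x = y)"
    proof (cases "t = Suc j")
      case True
      then show ?thesis using t j by (simp add: nth_insert_spike)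
    next
      case False
      then have "spike_origin j t < length L" "L ! spike_origin j t = x" "even (spike_origin j t)"
        using spike_origin[OF j _ False, of y] t j by simp_all
      then show ?thesis unfolding even_entries_def by blast
    qed
  next
    assume "x \<in> even_entries L \<or> (odd j \<and> x = y)"
    then consider t where "t < length L" "even t" "x = L ! t" | "odd j" "x = y"
      by (auto simp: even_entries_def)
    then show "x \<in> even_entries (insert_spike L j y)"
    proof cases
      case (1 t)
      define t' where "t' = (if t \<le> j then t else t + 2)"
      have "t' < length L + 2" "even t'" "insert_spike L j y ! t' = x"
        using 1 j by (auto simp: t'_def nth_insert_spike)
      then show ?thesis using j unfolding even_entries_def by force
    next
      case 2
      then show ?thesis using j unfolding even_entries_def
        by (force simp: nth_insert_spike intro!: exI[of _ "Suc j"])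
    qed
  qed
  then show ?thesis by auto
qed

lemma tree_walk_remove_spike:
  assumes L: "tree_walk L" and k: "0 < k" "k + 2 \<le> length L" and leaf: "count_list L (L ! k) = 1"
  shows "L ! (k - 1) = L ! (k + 1)" "tree_walk (remove_spike L k)"
    "L ! k \<notin> set (remove_spike L k)" "insert_spike (remove_spike L k) (k - 1) (L ! k) = L"
proof -
  obtain \<sigma> where \<sigma>: "reversal_pairing L \<sigma>" using L by (auto simp: tree_walk_def balanced_walk_def)
  have k1: "k - 1 < length L - 1" using k by simp
  have "\<sigma> (k - 1) = k"
    using count_list_1_index_unique[OF leaf, of "\<sigma> (k - 1)" k] reversal_pairingD[OF \<sigma> k1] k by simp
  note spike = balanced_walk_remove_spike[OF k \<sigma> this]
  show "L ! (k - 1) = L ! (k + 1)" using spike(1) .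
  define M where "M = remove_spike L k"
  have j: "k - 1 < length M" using k by (simp add: M_def length_remove_spike)
  show L_eq: "insert_spike (remove_spike L k) (k - 1) (L ! k) = L"
    using insert_remove_spike[OF k spike(1)] .
  have "count_list L (L ! k) = count_list M (L ! k) + 1 + (if L ! k = M ! (k - 1) then 1 else 0)"
    using count_list_insert_spike[OF j, of "L ! k" "L ! k"] L_eq by (simp add: M_def)
  then have y: "L ! k \<notin> set M" using leaf by (simp add: count_list_0_iff split: if_splits)
  then show "L ! k \<notin> set (remove_spike L k)" by (simp add: M_def)
  have "set L = insert (L ! k) (set M)"
    using set_insert_spike[OF j, of "L ! k"] unfolding M_def L_eq .
  then have "card (set L) = Suc (card (set M))" using y by simp
  moreover have "hd M = hd L" "last M = last L"
    using hd_insert_spike[OF j, of "L ! k"] last_insert_spike[OF j, of "L ! k"]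
    unfolding M_def L_eq by simp_all
  moreover have "M \<noteq> []" using j by auto
  moreover have "length M = length L - 2" using k by (simp add: M_def length_remove_spike)
  ultimately show "tree_walk (remove_spike L k)"
    using L k spike(2) by (auto simp: tree_walk_def M_def)
qed

lemma tree_walk_count_hd:
  assumes "tree_walk L" "length L \<noteq> 1"
  shows "count_list L (hd L) \<ge> 2"
proof -
  have "L \<noteq> []" "hd L = last L" using assms(1) by (auto simp: tree_walk_def)
  then show ?thesis
    using count_list_ge_2[of 0 "length L - 1" L "hd L"] assms(2)
      by (simp add: hd_conv_nth last_conv_nth)
qed

lemma tree_walk_interior_index:
  assumes "tree_walk L" "k < length L" "L ! k \<noteq> hd L"
  shows "0 < k" "k + 2 \<le> length L"
proof -
  have "L \<noteq> []" "hd L = last L" using assms(1) by (auto simp: tree_walk_def)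
  then have "L ! 0 = hd L" "L ! (length L - 1) = hd L" by (simp_all add: hd_conv_nth last_conv_nth)
  then have "k \<noteq> 0" "k \<noteq> length L - 1" using assms(3) by metis+
  then show "0 < k" "k + 2 \<le> length L" using assms(2) by auto
qed

text \<open>The 2n - 1 entries of a tree walk through n vertices cannot all be repeated, and the root
  is repeated at both ends.\<close>

lemma tree_walk_has_leaf:
  assumes L: "tree_walk L" and len: "length L \<noteq> 1"
  obtains k where "0 < k" "k + 2 \<le> length L" "count_list L (L ! k) = 1"
proof -
  have ne: "L \<noteq> []" "hd L = last L" "length L + 1 = 2 * card (set L)"
    using L by (auto simp: tree_walk_def)
  have "\<exists>v \<in> set L. count_list L v < 2"
  proof (rule ccontr)
    assume "\<not> ?thesis"
    then have "(\<Sum>v\<in>set L. 2) \<le> (\<Sum>v\<in>set L. count_list L v)"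
      by (intro sum_mono) (simp add: not_less)
    then show False using sum_count_set[of L "set L"] ne(3) by simp
  qed
  then obtain v where v: "v \<in> set L" "count_list L v < 2" by blast
  then have once: "count_list L v = 1" by (simp add: less_2_cases_iff count_list_0_iff)
  obtain k where k: "k < length L" "L ! k = v" using v(1) by (auto simp: in_set_conv_nth)
  have "L ! k \<noteq> hd L" using tree_walk_count_hd[OF L len] once k by auto
  then show ?thesis using that tree_walk_interior_index[OF L k(1)] k once by simp
qed

lemma tree_walk_parity:
  "tree_walk L \<Longrightarrow> i < length L \<Longrightarrow> j < length L \<Longrightarrow> L ! i = L ! j \<Longrightarrow> even i \<longleftrightarrow> even j"
proof (induction "length L" arbitrary: L i j rule: less_induct)
  case less
  show ?case
  proof (cases "length L = 1")
    case True
    then show ?thesis using less by simp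
  next
    case False
    obtain k where k: "0 < k" "k + 2 \<le> length L" and leaf: "count_list L (L ! k) = 1"
      using tree_walk_has_leaf[OF less.prems(1) False] by blast
    note spike = tree_walk_remove_spike[OF less.prems(1) k leaf]
    define M where "M = remove_spike L k"
    have j: "k - 1 < length M" and len: "length L = length M + 2"
      using k by (auto simp: M_def length_remove_spike)
    have Suc_j: "Suc (k - 1) = k" using k by simp
    show ?thesis
    proof (cases "i = k \<or> j = k")
      case True
      then show ?thesis
        using count_list_1_index_unique[OF leaf, of i k] count_list_1_index_unique[OF leaf, of j k] less
        by auto
    next
      case False
      have origin: "spike_origin (k - 1) x < length M" "M ! spike_origin (k - 1) x = L ! x"
        "even (spike_origin (k - 1) x) \<longleftrightarrow> even x" if "x < length L" "x \<noteq> k" for x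
        using spike_origin[OF j, of x "L ! k"] that Suc_j spike(4) len by (simp_all add: M_def)
      have "length M < length L" using len by simp
      from less.hyps[OF this spike(2)[folded M_def] origin(1)[of i] origin(1)[of j]] show ?thesis
        using origin[of i] origin[of j] False less.prems by simp
    qed
  qed
qed

lemma tree_walk_even_entries_iff:
  assumes "tree_walk L" "t < length L"
  shows "L ! t \<in> even_entries L \<longleftrightarrow> even t"
proof
  assume "L ! t \<in> even_entries L"
  then obtain s where "s < length L" "even s" "L ! s = L ! t" by (auto simp: even_entries_def)
  then show "even t" using tree_walk_parity[OF assms(1) _ assms(2)] by blast
next
  assume "even t"
  then show "L ! t \<in> even_entries L" using assms(2) by (auto simp: even_entries_def)
qed

section \<open>Counting tree walks by visit counts\<close>

definition walks_with_counts :: "'a \<Rightarrow> 'a set \<Rightarrow> ('a \<Rightarrow> nat) \<Rightarrow> 'a list set" where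
  "walks_with_counts r B d = {L. tree_walk L \<and> hd L = r \<and> even_entries L = B \<and> count_list L = d}"

lemma set_walks_with_counts:
  assumes "L \<in> walks_with_counts r B d"
  shows "set L = {v. d v \<noteq> 0}"
proof -
  have "count_list L = d" using assms by (simp add: walks_with_counts_def)
  moreover have "v \<in> set L \<longleftrightarrow> count_list L v \<noteq> 0" for v by (simp add: count_list_0_iff)
  ultimately show ?thesis by auto
qed

lemma length_walks_with_counts:
  assumes "L \<in> walks_with_counts r B d"
  shows "length L = sum d {v. d v \<noteq> 0}"
proof -
  have "count_list L = d" using assms by (simp add: walks_with_counts_def)
  then show ?thesis
    using sum_count_set[of L "set L", OF _ finite_set] set_walks_with_counts[OF assms]
    by simp
qed

lemma finite_walks_with_counts:
  assumes "finite {v. d v \<noteq> 0}"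
  shows "finite (walks_with_counts r B d)"
proof (rule finite_subset)
  show "walks_with_counts r B d \<subseteq> {L. set L \<subseteq> {v. d v \<noteq> 0} \<and> length L = sum d {v. d v \<noteq> 0}}"
  proof
    fix L assume "L \<in> walks_with_counts r B d"
    then show "L \<in> {L. set L \<subseteq> {v. d v \<noteq> 0} \<and> length L = sum d {v. d v \<noteq> 0}}"
      using set_walks_with_counts[OF \<open>L \<in> _\<close>] length_walks_with_counts[OF \<open>L \<in> _\<close>] by simp
  qed
  show "finite {L. set L \<subseteq> {v. d v \<noteq> 0} \<and> length L = sum d {v. d v \<noteq> 0}}"
    using finite_lists_length_eq[OF assms] .
qed

text \<open>The counts left after pruning a leaf y that hangs at x.\<close>

definition prune_counts :: "('a \<Rightarrow> nat) \<Rightarrow> 'a \<Rightarrow> 'a \<Rightarrow> 'a \<Rightarrow> nat" where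
  "prune_counts d y x = d(y := 0, x := d x - 1)"

lemma insert_leaf_walks_with_counts:
  assumes y: "d y = 1" "y \<noteq> r" and x: "x \<in> B \<longleftrightarrow> y \<notin> B"
    and L: "L \<in> walks_with_counts r (B - {y}) (prune_counts d y x)"
    and j: "j < length L" "L ! j = x"
  shows "insert_spike L j y \<in> walks_with_counts r B d"
proof -
  have L': "tree_walk L" "hd L = r" "even_entries L = B - {y}" "count_list L = prune_counts d y x"
    using L by (auto simp: walks_with_counts_def)
  have xy: "x \<noteq> y" using x by auto
  have "y \<notin> set L" using L'(4) xy by (auto simp: prune_counts_def count_list_0_iff[symmetric])
  then have "tree_walk (insert_spike L j y)" using tree_walk_insert_spike[OF L'(1) _ j(1)] by simp
  moreover have "hd (insert_spike L j y) = r" using hd_insert_spike[OF j(1)] L'(2) by simp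
  moreover have "count_list (insert_spike L j y) = d"
  proof
    fix v
    have "count_list L x \<noteq> 0" using j by (auto simp: count_list_0_iff)
    then show "count_list (insert_spike L j y) v = d v"
      using count_list_insert_spike[OF j(1), of y v] L'(4) j(2) xy y
        by (auto simp: prune_counts_def)
  qed
  moreover have "even_entries (insert_spike L j y) = B"
  proof -
    have "even j \<longleftrightarrow> x \<in> B - {y}"
      using tree_walk_even_entries_iff[OF L'(1) j(1)] L'(3) j(2) by simp
    then show ?thesis using even_entries_insert_spike[OF j(1), of y] L'(3) x xy by auto
  qed
  ultimately show ?thesis by (simp add: walks_with_counts_def)
qed

lemma remove_leaf_walks_with_counts:
  assumes y: "d y = 1" "y \<noteq> r" and L: "L \<in> walks_with_counts r B d"
  obtains x L' j where "d x \<noteq> 0" "x \<in> B \<longleftrightarrow> y \<notin> B"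
    "L' \<in> walks_with_counts r (B - {y}) (prune_counts d y x)"
    "j < length L'" "L' ! j = x" "L = insert_spike L' j y"
proof -
  have L0: "tree_walk L" "hd L = r" "even_entries L = B" "count_list L = d"
    using L by (auto simp: walks_with_counts_def)
  have ne: "L \<noteq> []" "hd L = last L" using L0 by (auto simp: tree_walk_def)
  have leaf: "count_list L y = 1" using L0(4) y by simp
  then obtain k where k: "k < length L" "L ! k = y"
    by (metis count_notin in_set_conv_nth zero_neq_one)
  have k': "0 < k" "k + 2 \<le> length L"
    using tree_walk_interior_index[OF L0(1) k(1)] k(2) y(2) L0(2) by auto
  note spike = tree_walk_remove_spike[OF L0(1) k', unfolded k(2), OF leaf]
  define L' where "L' = remove_spike L k"
  define x where "x = L ! (k - 1)"
  have j: "k - 1 < length L'" and Lj: "L' ! (k - 1) = x"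
    using k' by (simp_all add: L'_def x_def length_remove_spike nth_remove_spike)
  have L_eq: "L = insert_spike L' (k - 1) y" using spike(4) by (simp add: L'_def)
  have y': "y \<notin> set L'" using spike(3) by (simp add: L'_def)
  have xy: "x \<noteq> y" using y' j Lj by auto
  have "count_list L' = prune_counts d y x"
  proof
    fix v
    show "count_list L' v = prune_counts d y x v"
      using count_list_insert_spike[OF j, of y v] L_eq Lj L0(4) xy y'
        by (auto simp: prune_counts_def)
  qed
  moreover have "hd L' = r" using hd_insert_spike[OF j, of y] L_eq L0(2) by simp
  moreover have "even_entries L' = B - {y}"
  proof -
    have "B = (if even (k - 1) then even_entries L' else insert y (even_entries L'))"
      using even_entries_insert_spike[OF j, of y] L_eq L0(3) by simp
    then show ?thesis using y' even_entries_subset_set[of L'] by auto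
  qed
  moreover have "x \<in> B \<longleftrightarrow> y \<notin> B"
  proof -
    have "x \<in> B \<longleftrightarrow> even (k - 1)" "y \<in> B \<longleftrightarrow> even k"
      using tree_walk_even_entries_iff[OF L0(1)] k k' L0(3) by (auto simp: x_def)
    then show ?thesis using k' by auto
  qed
  moreover have "x \<in> set L" using k' by (simp add: x_def)
  then have "d x \<noteq> 0" using L0(4) count_list_0_iff by metis
  moreover have "tree_walk L'" using spike(2) by (simp add: L'_def)
  ultimately show ?thesis using that[OF _ _ _ j Lj L_eq] by (simp add: walks_with_counts_def)
qed

lemma bij_betw_insert_leaf:
  assumes y: "d y = 1" "y \<noteq> r"
  shows "bij_betw (\<lambda>(x, L, j). insert_spike L j y)
    (SIGMA x:{x. d x \<noteq> 0 \<and> (x \<in> B \<longleftrightarrow> y \<notin> B)}.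
       SIGMA L:walks_with_counts r (B - {y}) (prune_counts d y x). {j. j < length L \<and> L ! j = x})
    (walks_with_counts r B d)" (is "bij_betw ?F ?P _")
proof -
  have y_notin: "y \<notin> set L" if "L \<in> walks_with_counts r (B - {y}) (prune_counts d y x)" "x \<noteq> y" for x L
    using set_walks_with_counts[OF that(1)] that(2) by (auto simp: prune_counts_def)
  have "inj_on ?F ?P"
  proof (rule inj_onI)
    fix p q assume pP: "p \<in> ?P" and qP: "q \<in> ?P" and "?F p = ?F q"
    moreover obtain x L j where p: "p = (x, L, j)" by (cases p)
    moreover obtain x' L' j' where q: "q = (x', L', j')" by (cases q)
    ultimately have eq: "insert_spike L j y = insert_spike L' j' y" by simp
    have p': "x \<in> B \<longleftrightarrow> y \<notin> B" "L \<in> walks_with_counts r (B - {y}) (prune_counts d y x)"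
      "j < length L" "L ! j = x"
      using pP p by auto
    have q': "j' < length L'" "L' ! j' = x'" using qP q by auto
    have "x \<noteq> y" using p'(1) by auto
    then show "p = q" using insert_spike_inj[OF p'(3) q'(1) y_notin[OF p'(2)] eq] p q p' q' by simp
  qed
  moreover have "?F ` ?P = walks_with_counts r B d"
  proof
    show "?F ` ?P \<subseteq> walks_with_counts r B d"
      using insert_leaf_walks_with_counts[of d y r, OF y] by auto
    show "walks_with_counts r B d \<subseteq> ?F ` ?P"
    proof
      fix L assume "L \<in> walks_with_counts r B d"
      then obtain x L' j where "d x \<noteq> 0" "x \<in> B \<longleftrightarrow> y \<notin> B"
        "L' \<in> walks_with_counts r (B - {y}) (prune_counts d y x)"
        "j < length L'" "L' ! j = x" "L = insert_spike L' j y"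
        using remove_leaf_walks_with_counts[of d y r, OF y] by metis
      then have "(x, L', j) \<in> ?P" "L = ?F (x, L', j)" by simp_all
      then show "L \<in> ?F ` ?P" by blast
    qed
  qed
  ultimately show ?thesis by (simp add: bij_betw_def)
qed

text \<open>Every walk arises from the walk without the leaf y by inserting y next to one of the
  d x - 1 remaining visits of its neighbour x.\<close>

lemma card_walks_with_counts_leaf:
  assumes fin: "finite {v. d v \<noteq> 0}" and y: "d y = 1" "y \<noteq> r"
  shows "card (walks_with_counts r B d) = (\<Sum>x | d x \<noteq> 0 \<and> (x \<in> B \<longleftrightarrow> y \<notin> B).
    (d x - 1) * card (walks_with_counts r (B - {y}) (prune_counts d y x)))"
proof -
  define X where "X = {x. d x \<noteq> 0 \<and> (x \<in> B \<longleftrightarrow> y \<notin> B)}"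
  define S where "S x = walks_with_counts r (B - {y}) (prune_counts d y x)" for x
  have finX: "finite X" using fin by (auto simp: X_def intro: finite_subset)
  have finS: "finite (S x)" for x
    unfolding S_def by (rule finite_walks_with_counts, rule finite_subset[OF _ fin])
      (auto simp: prune_counts_def)
  have "card (walks_with_counts r B d) = card (SIGMA x:X. SIGMA L:S x. {j. j < length L \<and> L ! j = x})"
    using bij_betw_same_card[OF bij_betw_insert_leaf[of d y r B, OF y]] by (simp add: X_def S_def)
  also have "\<dots> = (\<Sum>x\<in>X. \<Sum>L\<in>S x. count_list L x)"
    using finX finS by (simp add: count_list_conv_card_indices)
  also have "\<dots> = (\<Sum>x\<in>X. \<Sum>L\<in>S x. d x - 1)"
  proof (intro sum.cong refl)
    fix x L assume "x \<in> X" "L \<in> S x"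
    then show "count_list L x = d x - 1"
      by (auto simp: S_def X_def walks_with_counts_def prune_counts_def)
  qed
  finally show ?thesis by (simp add: X_def S_def mult.commute)
qed

text \<open>The counts of a walk through a tree with l edges on V whose even positions visit B:
  the walk has length 2l+1, with l+1 even and l odd positions.\<close>

definition count_profile :: "'a set \<Rightarrow> 'a set \<Rightarrow> ('a \<Rightarrow> nat) \<Rightarrow> nat \<Rightarrow> bool" where
  "count_profile V B d l \<longleftrightarrow> finite V \<and> V = {v. d v \<noteq> 0} \<and> card V = Suc l \<and> B \<subseteq> V \<and>
     sum d B = Suc l \<and> sum d (V - B) = l"

lemma count_profile_sum_pred:
  assumes "count_profile V B d l"
  shows "(\<Sum>x\<in>B. d x - 1) = card (V - B)" "(\<Sum>x\<in>V - B. d x - 1) = card B - 1"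
proof -
  have fin: "finite B" "finite (V - B)" and pos: "\<forall>x\<in>V. 1 \<le> d x"
    using assms by (auto simp: count_profile_def intro: finite_subset)
  have card: "card B + card (V - B) = Suc l"
    using assms card_Diff_subset[OF fin(1)] card_mono[of V B] by (auto simp: count_profile_def)
  have "(\<Sum>x\<in>A. d x - 1) = sum d A - card A" if "A \<subseteq> V" for A
    using sum_subtractf_nat[of A "\<lambda>_. 1" d] pos that by auto
  then show "(\<Sum>x\<in>B. d x - 1) = card (V - B)" "(\<Sum>x\<in>V - B. d x - 1) = card B - 1"
    using assms card by (auto simp: count_profile_def)
qed

lemma sum_prune_counts:
  assumes "finite A" "y \<notin> A" "x \<noteq> y" "1 \<le> d x"
  shows "sum (prune_counts d y x) A + (if x \<in> A then 1 else 0) = sum d A"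
proof (cases "x \<in> A")
  case True
  have "sum (prune_counts d y x) (A - {x}) = sum d (A - {x})"
    using assms by (intro sum.cong) (auto simp: prune_counts_def)
  then show ?thesis
    using True assms sum.remove[of A x d] sum.remove[of A x "prune_counts d y x"]
    by (simp add: prune_counts_def)
next
  case False
  have "sum (prune_counts d y x) A = sum d A"
    using assms False by (intro sum.cong) (auto simp: prune_counts_def)
  then show ?thesis using False by simp
qed

lemma count_profile_prune:
  assumes P: "count_profile V B d l" and y: "y \<in> V" "d y = 1"
    and x: "x \<in> V" "x \<noteq> y" "2 \<le> d x" "x \<in> B \<longleftrightarrow> y \<notin> B"
  shows "count_profile (V - {y}) (B - {y}) (prune_counts d y x) (l - 1)"
proof -
  have fin: "finite V" "finite B" and sums: "sum d B = Suc l" "sum d (V - B) = l"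
    and V: "V = {v. d v \<noteq> 0}" "card V = Suc l" "B \<subseteq> V"
    using P by (auto simp: count_profile_def intro: finite_subset)
  have l: "1 \<le> l" using V(2) card_mono[OF fin(1), of "{x, y}"] x y by auto
  have support: "V - {y} = {v. prune_counts d y x v \<noteq> 0}"
    using V(1) x(2,3) by (auto simp: prune_counts_def)
  have prune_sum: "sum (prune_counts d y x) A + (if x \<in> A then 1 else 0) = sum d A"
    if "finite A" "y \<notin> A" for A
    using sum_prune_counts[OF that x(2)] x(3) by simp
  have "sum (prune_counts d y x) (B - {y}) = Suc (l - 1) \<and>
        sum (prune_counts d y x) (V - {y} - (B - {y})) = l - 1"
  proof (cases "y \<in> B")
    case True
    have "V - {y} - (B - {y}) = V - B" using True by auto
    then show ?thesis
      using prune_sum[of "B - {y}"] prune_sum[of "V - B"] fin sums y x True l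
      by (auto simp: sum_diff1_nat)
  next
    case False
    have "V - {y} - (B - {y}) = (V - B) - {y}" "B - {y} = B" using False by auto
    then show ?thesis
      using prune_sum[of B] prune_sum[of "V - B - {y}"] fin sums y x False l
      by (auto simp: sum_diff1_nat)
  qed
  moreover have "card (V - {y}) = Suc (l - 1)" using V(2) y(1) fin l by simp
  moreover have "finite (V - {y})" "B - {y} \<subseteq> V - {y}" using fin V(3) by auto
  ultimately show ?thesis using support unfolding count_profile_def by blast
qed

lemma count_profile_sum:
  assumes "count_profile V B d l"
  shows "sum d V = Suc (2 * l)"
  using assms sum.subset_diff[of B V d] by (auto simp: count_profile_def)

lemma count_profile_leaf:
  assumes P: "count_profile V B d l" and r: "r \<in> V" "2 \<le> d r"
  obtains y where "y \<in> V" "y \<noteq> r" "d y = 1"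
proof -
  have fin: "finite V" and V: "V = {v. d v \<noteq> 0}" "card V = Suc l"
    using P by (auto simp: count_profile_def)
  have total: "d r + sum d (V - {r}) = Suc (2 * l)"
    using count_profile_sum[OF P] sum.remove[OF fin r(1), of d] by simp
  have "\<exists>y \<in> V - {r}. d y < 2"
  proof (rule ccontr)
    assume "\<not> ?thesis"
    then have "\<forall>v\<in>V - {r}. 2 \<le> d v" by (simp add: not_less)
    then have "(\<Sum>v\<in>V - {r}. 2) \<le> sum d (V - {r})" by (intro sum_mono) blast
    then show False using total r fin V(2) by simp
  qed
  then obtain y where "y \<in> V" "y \<noteq> r" "d y < 2" by blast
  moreover have "d y \<noteq> 0" using \<open>y \<in> V\<close> V(1) by blast
  ultimately show ?thesis using that by simp
qed

lemma walks_with_counts_singleton: "walks_with_counts r {r} (\<lambda>v. if v = r then 1 else 0) = {[r]}"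
proof
  show "{[r]} \<subseteq> walks_with_counts r {r} (\<lambda>v. if v = r then 1 else 0)"
    using tree_walk_singleton[of r]
      by (auto simp: walks_with_counts_def even_entries_def fun_eq_iff)
  show "walks_with_counts r {r} (\<lambda>v. if v = r then 1 else 0) \<subseteq> {[r]}"
  proof
    fix L assume L: "L \<in> walks_with_counts r {r} (\<lambda>v. if v = r then 1 else 0)"
    have "{v. (if v = r then 1 else 0) \<noteq> (0 :: nat)} = {r}" by auto
    then have "length L = 1" using length_walks_with_counts[OF L] by simp
    moreover have "hd L = r" using L by (simp add: walks_with_counts_def)
    ultimately show "L \<in> {[r]}" by (cases L) auto
  qed
qed

lemma card_walks_with_counts_one_edge:
  assumes P: "count_profile V B d 1" and r: "r \<in> B"
  shows "card (walks_with_counts r B d) = fact (card (V - B) - 1) * fact (card B - 1) * (d r - 1)"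
proof -
  have fin: "finite V" and V: "V = {v. d v \<noteq> 0}" "card V = 2" "B \<subseteq> V"
    and sums: "sum d B = 2" "sum d (V - B) = 1"
    using P by (auto simp: count_profile_def)
  obtain w where w: "w \<in> V - B" using sums(2) by (metis all_not_in_conv sum.empty zero_neq_one)
  have "r \<noteq> w" "{r, w} \<subseteq> V" using r w V(3) by auto
  then have "{r, w} = V" by (intro card_subset_eq[OF fin]) (simp_all add: V(2))
  then have "V = {r, w}" ..
  then have BW: "B = {r}" "V - B = {w}" using r w V(3) by auto
  then have d: "d r = 2" "d w = 1" using sums by simp_all
  have "{x. d x \<noteq> 0 \<and> (x \<in> B \<longleftrightarrow> w \<notin> B)} = {r}" using BW \<open>V = {r, w}\<close> V(1) by auto
  moreover have "prune_counts d w r = (\<lambda>v. if v = r then 1 else 0)"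
  proof
    fix v
    have "v \<notin> {r, w} \<Longrightarrow> d v = 0" using \<open>V = {r, w}\<close> V(1) by blast
    then show "prune_counts d w r v = (if v = r then 1 else 0)"
      using d \<open>r \<noteq> w\<close> by (simp add: prune_counts_def)
  qed
  ultimately have "card (walks_with_counts r B d) = 1"
    using card_walks_with_counts_leaf[of d w r B] fin V(1) d BW \<open>r \<noteq> w\<close>
    by (simp add: walks_with_counts_singleton)
  then show ?thesis using BW d by simp
qed

lemma card_walks_with_counts_prune_step:
  assumes IH: "\<And>V' B' d'. count_profile V' B' d' l \<Longrightarrow> r \<in> B' \<Longrightarrow>
      card (walks_with_counts r B' d') = fact (card (V' - B') - 1) * fact (card B' - 1) * (d' r - 1)"
    and P: "count_profile V B d (Suc l)" and r: "r \<in> B - {y}" and y: "y \<in> V" "d y = 1"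
    and x: "x \<in> V" "x \<noteq> y" "x \<in> B \<longleftrightarrow> y \<notin> B"
  shows "(d x - 1) * card (walks_with_counts r (B - {y}) (prune_counts d y x)) =
    (d x - 1) * (fact (card (V - B - {y}) - 1) * fact (card (B - {y}) - 1) * (prune_counts d y x r - 1))"
proof (cases "d x = 1")
  case False
  then have "2 \<le> d x" using x(1) P by (auto simp: count_profile_def)
  then have "count_profile (V - {y}) (B - {y}) (prune_counts d y x) l"
    using count_profile_prune[OF P y(1,2) x(1,2) _ x(3)] by simp
  moreover have "V - {y} - (B - {y}) = V - B - {y}" by auto
  ultimately show ?thesis using IH r by simp
qed simp

lemma card_walks_with_counts_black_leaf:
  assumes IH: "\<And>V' B' d'. count_profile V' B' d' l \<Longrightarrow> r \<in> B' \<Longrightarrow>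
      card (walks_with_counts r B' d') = fact (card (V' - B') - 1) * fact (card B' - 1) * (d' r - 1)"
    and P: "count_profile V B d (Suc l)" and r: "r \<in> B" and y: "y \<in> B" "y \<noteq> r" "d y = 1"
  shows "card (walks_with_counts r B d) = fact (card (V - B) - 1) * fact (card B - 1) * (d r - 1)"
proof -
  define K :: nat where "K = fact (card (V - B) - 1) * fact (card B - 2) * (d r - 1)"
  have fin: "finite V" "finite B" and V: "V = {v. d v \<noteq> 0}" "B \<subseteq> V"
    using P by (auto simp: count_profile_def intro: finite_subset)
  have X: "{x. d x \<noteq> 0 \<and> (x \<in> B \<longleftrightarrow> y \<notin> B)} = V - B" using V y(1) by auto
  have summand: "(d x - 1) * card (walks_with_counts r (B - {y}) (prune_counts d y x)) = (d x - 1) * K"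
    if x: "x \<in> V - B" for x
  proof -
    have "r \<in> B - {y}" "y \<in> V" "x \<in> V" "x \<noteq> y" "x \<in> B \<longleftrightarrow> y \<notin> B" using x y r V(2) by auto
    note step = card_walks_with_counts_prune_step[OF IH P this(1,2) y(3) this(3-5)]
    have "V - B - {y} = V - B" "card (B - {y}) - 1 = card B - 2" "prune_counts d y x r = d r"
      using x y r fin by (auto simp: prune_counts_def)
    then show ?thesis using step by (simp add: K_def)
  qed
  have "finite {v. d v \<noteq> 0}" using fin(1) V(1) by simp
  then have "card (walks_with_counts r B d) =
      (\<Sum>x\<in>V - B. (d x - 1) * card (walks_with_counts r (B - {y}) (prune_counts d y x)))"
    using card_walks_with_counts_leaf[of d y r B] y(2,3) X by simp
  also have "\<dots> = (\<Sum>x\<in>V - B. (d x - 1) * K)" using summand by (rule sum.cong[OF refl])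
  also have "\<dots> = (\<Sum>x\<in>V - B. d x - 1) * K" by (rule sum_distrib_right[symmetric])
  also have "\<dots> = (card B - 1) * K" using count_profile_sum_pred(2)[OF P] by simp
  also have "\<dots> = fact (card (V - B) - 1) * ((card B - 1) * fact (card B - 2)) * (d r - 1)"
    by (simp add: K_def)
  also have "(card B - 1) * fact (card B - 2) = (fact (card B - 1) :: nat)"
  proof -
    have "2 \<le> card B" using card_mono[OF fin(2), of "{r, y}"] r y by simp
    then obtain m where "card B = Suc (Suc m)" by (metis add_2_eq_Suc le_Suc_ex)
    then show ?thesis by simp
  qed
  finally show ?thesis .
qed

lemma sum_pred_mult_pred_root:
  fixes d :: "'a \<Rightarrow> nat"
  assumes "finite B" "r \<in> B"
  shows "(\<Sum>x\<in>B. (d x - 1) * (d r - 1 - (if x = r then 1 else 0))) =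
    (d r - 1) * ((\<Sum>x\<in>B. d x - 1) - 1)"
proof -
  define a where "a = d r - 1"
  define s where "s = (\<Sum>x\<in>B - {r}. d x - 1)"
  have "(\<Sum>x\<in>B - {r}. (d x - 1) * (d r - 1 - (if x = r then 1 else 0))) = s * a"
    by (simp add: s_def a_def sum_distrib_right)
  then have "(\<Sum>x\<in>B. (d x - 1) * (d r - 1 - (if x = r then 1 else 0))) = a * (a - 1) + s * a"
    by (simp add: sum.remove[OF assms] a_def)
  moreover have "(\<Sum>x\<in>B. d x - 1) = a + s" by (simp add: sum.remove[OF assms] a_def s_def)
  moreover have "a * (a - 1) + s * a = a * (a + s - 1)" by (cases a) (simp_all add: algebra_simps)
  ultimately show ?thesis by (simp add: a_def)
qed

lemma card_walks_with_counts_white_leaf: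
  assumes IH: "\<And>V' B' d'. count_profile V' B' d' l \<Longrightarrow> r \<in> B' \<Longrightarrow>
      card (walks_with_counts r B' d') = fact (card (V' - B') - 1) * fact (card B' - 1) * (d' r - 1)"
    and P: "count_profile V B d (Suc l)" and l: "1 \<le> l" and r: "r \<in> B"
    and y: "y \<in> V" "y \<notin> B" "d y = 1"
  shows "card (walks_with_counts r B d) = fact (card (V - B) - 1) * fact (card B - 1) * (d r - 1)"
proof -
  define K :: nat where "K = fact (card (V - B) - 2) * fact (card B - 1)"
  define a where "a = d r - 1"
  have fin: "finite V" "finite B" and V: "V = {v. d v \<noteq> 0}" "B \<subseteq> V"
    and sumW: "sum d (V - B) = Suc l"
    using P by (auto simp: count_profile_def intro: finite_subset)
  have "V - B - {y} \<noteq> {}"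
  proof
    assume "V - B - {y} = {}"
    then have "V - B = {y}" using y by auto
    then show False using sumW y l by simp
  qed
  then have "0 < card (V - B - {y})" using fin by (simp add: card_gt_0_iff)
  then have W2: "2 \<le> card (V - B)" using y card_Diff_singleton[of y "V - B"] by simp
  have X: "{x. d x \<noteq> 0 \<and> (x \<in> B \<longleftrightarrow> y \<notin> B)} = B" using V y(2) by auto
  have summand: "(d x - 1) * card (walks_with_counts r (B - {y}) (prune_counts d y x)) =
      (d x - 1) * (K * (a - (if x = r then 1 else 0)))" if x: "x \<in> B" for x
  proof -
    have "r \<in> B - {y}" "x \<in> V" "x \<noteq> y" "x \<in> B \<longleftrightarrow> y \<notin> B" using x y r V(2) by auto
    note step = card_walks_with_counts_prune_step[OF IH P this(1) y(1,3) this(2-4)]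
    have "B - {y} = B" "prune_counts d y x r - 1 = a - (if x = r then 1 else 0)"
      "card (V - B - {y}) - 1 = card (V - B) - 2"
      using y fin by (auto simp: prune_counts_def a_def)
    then show ?thesis using step by (simp add: K_def)
  qed
  have "finite {v. d v \<noteq> 0}" using fin(1) V(1) by simp
  then have "card (walks_with_counts r B d) =
      (\<Sum>x\<in>B. (d x - 1) * card (walks_with_counts r (B - {y}) (prune_counts d y x)))"
    using card_walks_with_counts_leaf[of d y r B] r y(2,3) X by auto
  also have "\<dots> = (\<Sum>x\<in>B. (d x - 1) * (K * (a - (if x = r then 1 else 0))))"
    using summand by (rule sum.cong[OF refl])
  also have "\<dots> = K * (\<Sum>x\<in>B. (d x - 1) * (a - (if x = r then 1 else 0)))"
    by (simp add: sum_distrib_left mult_ac)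
  also have "(\<Sum>x\<in>B. (d x - 1) * (a - (if x = r then 1 else 0))) = a * (card (V - B) - 1)"
    using sum_pred_mult_pred_root[OF fin(2) r, of d] count_profile_sum_pred(1)[OF P]
      by (simp add: a_def)
  also have "K * (a * (card (V - B) - 1)) = fact (card (V - B) - 1) * fact (card B - 1) * a"
  proof -
    obtain m where "card (V - B) = Suc (Suc m)" using W2 by (metis add_2_eq_Suc le_Suc_ex)
    then show ?thesis by (simp add: K_def algebra_simps)
  qed
  finally show ?thesis by (simp add: a_def)
qed

theorem card_walks_with_counts:
  assumes "count_profile V B d l" "1 \<le> l" "r \<in> B"
  shows "card (walks_with_counts r B d) = fact (card (V - B) - 1) * fact (card B - 1) * (d r - 1)"
  using assms(2,1,3)
proof (induction l arbitrary: V B d rule: nat_induct_at_least)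
  case base
  then show ?case by (rule card_walks_with_counts_one_edge)
next
  case (Suc l)
  have rV: "r \<in> V" and fin: "finite V" and V: "V = {v. d v \<noteq> 0}" "card V = Suc (Suc l)"
    using Suc.prems by (auto simp: count_profile_def)
  show ?case
  proof (cases "d r = 1")
    case True
    have "L \<notin> walks_with_counts r B d" for L
    proof
      assume L: "L \<in> walks_with_counts r B d"
      then have "length L \<noteq> 1"
        using length_walks_with_counts[OF L] count_profile_sum[OF Suc.prems(1)] V(1) by simp
      then show False using tree_walk_count_hd L True by (fastforce simp: walks_with_counts_def)
    qed
    then have "walks_with_counts r B d = {}" by blast
    then show ?thesis using True by simp
  next
    case False
    then have "2 \<le> d r" using rV V(1) by auto
    then obtain y where y: "y \<in> V" "y \<noteq> r" "d y = 1"
      using count_profile_leaf[OF Suc.prems(1) rV] by blast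
    show ?thesis
    proof (cases "y \<in> B")
      case True
      then show ?thesis using card_walks_with_counts_black_leaf[OF Suc.IH Suc.prems] y by blast
    next
      case False
      then show ?thesis
        using card_walks_with_counts_white_leaf[OF Suc.IH Suc.prems(1) Suc.hyps Suc.prems(2)] y by blast
    qed
  qed
qed

section \<open>Compositions\<close>

definition compositions :: "'a set \<Rightarrow> nat \<Rightarrow> ('a \<Rightarrow> nat) set" where
  "compositions A n = {f. (\<forall>v. v \<notin> A \<longrightarrow> f v = 0) \<and> (\<forall>v\<in>A. 1 \<le> f v) \<and> sum f A = n}"

lemma finite_compositions:
  assumes "finite A"
  shows "finite (compositions A n)"
proof (rule finite_subset[OF _ finite_set_of_finite_funs[OF assms, of "{..n}" 0]])
  show "compositions A n \<subseteq> {f. \<forall>x. (x \<in> A \<longrightarrow> f x \<in> {..n}) \<and> (x \<notin> A \<longrightarrow> f x = 0)}"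
  proof
    fix f assume f: "f \<in> compositions A n"
    have "f x \<le> n" if "x \<in> A" for x
      using member_le_sum[of x A f] that assms f by (simp add: compositions_def)
    then show "f \<in> {f. \<forall>x. (x \<in> A \<longrightarrow> f x \<in> {..n}) \<and> (x \<notin> A \<longrightarrow> f x = 0)}"
      using f by (auto simp: compositions_def)
  qed
qed simp

lemma compositions_insert:
  assumes "finite A" "A \<noteq> {}" "a \<notin> A"
  shows "bij_betw (\<lambda>(i, g). g(a := Suc i)) (SIGMA i:{..<n}. compositions A (n - i))
    (compositions (insert a A) (Suc n))"
proof (rule bij_betwI')
  fix p q
  assume "p \<in> (SIGMA i:{..<n}. compositions A (n - i))" "q \<in> (SIGMA i:{..<n}. compositions A (n - i))"
  then obtain i g j h where pq: "p = (i, g)" "q = (j, h)" "g a = 0" "h a = 0"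
    using assms(3) by (auto simp: compositions_def)
  show "((\<lambda>(i, g). g(a := Suc i)) p = (\<lambda>(i, g). g(a := Suc i)) q) = (p = q)"
  proof
    assume "(\<lambda>(i, g). g(a := Suc i)) p = (\<lambda>(i, g). g(a := Suc i)) q"
    then have eq: "g(a := Suc i) = h(a := Suc j)" using pq by simp
    then have "Suc i = Suc j" by (metis fun_upd_same)
    moreover have "g = h"
    proof
      fix x
      show "g x = h x" using fun_cong[OF eq, of x] pq by (cases "x = a") auto
    qed
    ultimately show "p = q" using pq by simp
  qed simp
next
  fix p assume "p \<in> (SIGMA i:{..<n}. compositions A (n - i))"
  then obtain i g where p: "p = (i, g)" "i < n" "g \<in> compositions A (n - i)" by auto
  have "sum (g(a := Suc i)) A = sum g A" using assms(3) by (intro sum.cong) auto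
  then show "(\<lambda>(i, g). g(a := Suc i)) p \<in> compositions (insert a A) (Suc n)"
    using p assms by (auto simp: compositions_def)
next
  fix f assume f: "f \<in> compositions (insert a A) (Suc n)"
  define g where "g = f(a := 0)"
  have sum_g: "sum g A = sum f A" using assms(3) by (intro sum.cong) (auto simp: g_def)
  have "card A \<le> sum f A" using f sum_mono[of A "\<lambda>_. 1" f] by (auto simp: compositions_def)
  moreover have "0 < card A" using assms by (simp add: card_gt_0_iff)
  moreover have "f a + sum f A = Suc n" "1 \<le> f a" using f assms by (auto simp: compositions_def)
  ultimately have "f a - 1 < n" "g \<in> compositions A (n - (f a - 1))"
    using f sum_g assms(3) by (auto simp: compositions_def g_def)
  moreover have "f = g(a := Suc (f a - 1))" using \<open>1 \<le> f a\<close> by (auto simp: g_def)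
  ultimately show "\<exists>p\<in>(SIGMA i:{..<n}. compositions A (n - i)). f = (\<lambda>(i, g). g(a := Suc i)) p"
    by (intro bexI[of _ "(f a - 1, g)"]) auto
qed

lemma card_compositions:
  "finite A \<Longrightarrow> A \<noteq> {} \<Longrightarrow> card (compositions A (Suc n)) = n choose (card A - 1)"
proof (induction A arbitrary: n rule: finite_ne_induct)
  case (singleton a)
  have "compositions {a} (Suc n) = {\<lambda>v. if v = a then Suc n else 0}"
    by (auto simp: compositions_def fun_eq_iff)
  then show ?case by simp
next
  case (insert a A)
  have "card (compositions (insert a A) (Suc n)) = card (SIGMA i:{..<n}. compositions A (n - i))"
    using bij_betw_same_card[OF compositions_insert[OF insert.hyps(1,2,3)]] by simp
  also have "\<dots> = (\<Sum>i<n. card (compositions A (Suc (n - Suc i))))"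
    using insert.hyps(1) by (simp add: finite_compositions Suc_diff_Suc)
  also have "\<dots> = (\<Sum>i<n. (n - Suc i) choose (card A - 1))" using insert.IH by simp
  also have "\<dots> = (\<Sum>i<n. i choose (card A - 1))" by (rule sum.nat_diff_reindex)
  also have "\<dots> = n choose Suc (card A - 1)"
    by (cases n) (simp_all add: lessThan_Suc_atMost sum_choose_upper)
  finally show ?case using insert.hyps by (simp add: card_gt_0_iff)
qed

section \<open>Counting tree walks by black vertices\<close>

lemma sum_count_list_conv_card:
  assumes "finite A"
  shows "(\<Sum>v\<in>A. count_list L v) = card {i. i < length L \<and> L ! i \<in> A}"
proof -
  have "(\<Sum>v\<in>A. count_list L v) = card (\<Union>v\<in>A. {i. i < length L \<and> L ! i = v})"
    unfolding count_list_conv_card_indices using assms by (subst card_UN_disjoint) auto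
  also have "(\<Union>v\<in>A. {i. i < length L \<and> L ! i = v}) = {i. i < length L \<and> L ! i \<in> A}" by auto
  finally show ?thesis .
qed

lemma card_even_below: "card {i. i < Suc (2 * l) \<and> even i} = Suc l"
proof -
  have "{i. i < Suc (2 * l) \<and> even i} = (\<lambda>j. 2 * j) ` {..l}" by (auto elim!: evenE)
  then show ?thesis by (simp add: card_image inj_on_def)
qed

lemma card_odd_below: "card {i. i < Suc (2 * l) \<and> odd i} = l"
proof -
  have "{i. i < Suc (2 * l) \<and> odd i} = (\<lambda>j. Suc (2 * j)) ` {..<l}" by (auto elim!: oddE)
  then show ?thesis by (simp add: card_image inj_on_def)
qed

lemma tree_walk_colour_sums:
  assumes L: "tree_walk L" and len: "length L = Suc (2 * l)"
  shows "sum (count_list L) (even_entries L) = Suc l"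
    "sum (count_list L) (set L - even_entries L) = l"
proof -
  have fin: "finite (even_entries L)" using finite_subset[OF even_entries_subset_set] by simp
  have "{i. i < length L \<and> L ! i \<in> even_entries L} = {i. i < Suc (2 * l) \<and> even i}"
    "{i. i < length L \<and> L ! i \<in> set L - even_entries L} = {i. i < Suc (2 * l) \<and> odd i}"
    using tree_walk_even_entries_iff[OF L] len by auto
  then show "sum (count_list L) (even_entries L) = Suc l"
    "sum (count_list L) (set L - even_entries L) = l"
    using sum_count_list_conv_card[OF fin] sum_count_list_conv_card[of "set L - even_entries L"]
    by (simp_all add: card_even_below card_odd_below)
qed

text \<open>A closed walk through a tree visits every vertex once per incident edge, and the root
  once more.  Here f and g are the degrees of the vertices in B and in V - B.\<close>

definition counts_of_degrees :: "'a \<Rightarrow> ('a \<Rightarrow> nat) \<Rightarrow> ('a \<Rightarrow> nat) \<Rightarrow> 'a \<Rightarrow> nat" where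
  "counts_of_degrees r f g v = f v + g v + (if v = r then 1 else 0)"

lemma count_profile_counts_of_degrees:
  assumes V: "finite V" "card V = Suc l" "B \<subseteq> V" and r: "r \<in> B"
    and f: "f \<in> compositions B l" and g: "g \<in> compositions (V - B) l"
  shows "count_profile V B (counts_of_degrees r f g) l"
proof -
  have fin: "finite B" "finite (V - B)" using V by (auto intro: finite_subset)
  have f0: "\<forall>v. v \<notin> B \<longrightarrow> f v = 0" and g0: "\<forall>v. v \<notin> V - B \<longrightarrow> g v = 0"
    and pos: "\<And>v. v \<in> B \<Longrightarrow> 1 \<le> f v" "\<And>v. v \<in> V - B \<Longrightarrow> 1 \<le> g v"
    and sums: "sum f B = l" "sum g (V - B) = l"
    using f g by (auto simp: compositions_def)
  have "counts_of_degrees r f g v \<noteq> 0 \<longleftrightarrow> v \<in> V" for v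
    using f0 g0 pos[of v] r V(3)
      by (cases "v \<in> B"; cases "v \<in> V") (auto simp: counts_of_degrees_def)
  then have "V = {v. counts_of_degrees r f g v \<noteq> 0}" by blast
  moreover have "sum (counts_of_degrees r f g) B = Suc l"
    using fin(1) r g0 sums(1) by (simp add: counts_of_degrees_def sum.distrib)
  moreover have "sum (counts_of_degrees r f g) (V - B) = l"
    using fin(2) r f0 sums(2) by (simp add: counts_of_degrees_def sum.distrib)
  ultimately show ?thesis using V unfolding count_profile_def by blast
qed

lemma tree_walk_counts_of_degrees:
  assumes L: "tree_walk L" "set L = V" "even_entries L = B" and V: "card V = Suc l" and l: "1 \<le> l"
  obtains f g where "hd L \<in> B" "f \<in> compositions B l" "g \<in> compositions (V - B) l"
    "count_list L = counts_of_degrees (hd L) f g"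
proof -
  define r where "r = hd L"
  have fin: "finite B" using L(2,3) even_entries_subset_set[of L] by (auto intro: finite_subset)
  have len: "length L = Suc (2 * l)" using L V by (simp add: tree_walk_def)
  have "L \<noteq> []" using L by (simp add: tree_walk_def)
  then have r: "r \<in> B"
    using tree_walk_even_entries_iff[OF L(1), of 0] L(3) by (simp add: r_def hd_conv_nth)
  have r2: "2 \<le> count_list L r" using tree_walk_count_hd[OF L(1)] len l by (simp add: r_def)
  define f where "f v = (if v \<in> B then count_list L v - (if v = r then 1 else 0) else 0)" for v
  define g where "g v = (if v \<in> V - B then count_list L v else 0)" for v
  have pos: "count_list L v \<noteq> 0 \<longleftrightarrow> v \<in> V" for v using L(2) by (simp add: count_list_0_iff)
  have on_B: "count_list L v = f v + (if v = r then 1 else 0)" if "v \<in> B" for v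
    using that r2 by (simp add: f_def)
  have counts: "count_list L v = counts_of_degrees r f g v" for v
  proof (cases "v \<in> B")
    case True
    then show ?thesis using on_B[OF True] by (simp add: counts_of_degrees_def g_def)
  next
    case False
    then show ?thesis using r pos[of v] by (auto simp: counts_of_degrees_def f_def g_def)
  qed
  have sums: "sum (count_list L) B = Suc l" "sum (count_list L) (V - B) = l"
    using tree_walk_colour_sums[OF L(1) len] L(2,3) by simp_all
  have "sum (count_list L) B = sum f B + 1"
    using fin r by (simp add: on_B sum.distrib)
  moreover have "1 \<le> f v" if "v \<in> B" for v
    using that r2 pos[of v] L(2,3) even_entries_subset_set[of L] by (auto simp: f_def)
  ultimately have "f \<in> compositions B l"
    using sums(1) by (simp add: compositions_def f_def)
  moreover have "g \<in> compositions (V - B) l"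
    using sums(2) pos by (simp add: compositions_def g_def Suc_le_eq)
  ultimately show ?thesis using that r ext[of "count_list L", OF counts] by (simp add: r_def)
qed

lemma tree_walks_black_partition:
  assumes V: "finite V" "card V = Suc l" "B \<subseteq> V" and l: "1 \<le> l"
  shows "{L. tree_walk L \<and> set L = V \<and> even_entries L = B} =
    (\<Union>(r, f, g) \<in> B \<times> compositions B l \<times> compositions (V - B) l.
       walks_with_counts r B (counts_of_degrees r f g))" (is "?W = ?U")
proof
  show "?W \<subseteq> ?U"
  proof
    fix L assume "L \<in> ?W"
    then have L: "tree_walk L" "set L = V" "even_entries L = B" by auto
    then obtain f g where "hd L \<in> B" "f \<in> compositions B l" "g \<in> compositions (V - B) l"
      "count_list L = counts_of_degrees (hd L) f g"
      using tree_walk_counts_of_degrees V(2) l by metis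
    then show "L \<in> ?U" using L by (auto simp: walks_with_counts_def)
  qed
  show "?U \<subseteq> ?W"
  proof
    fix L assume "L \<in> ?U"
    then obtain r f g where rfg: "r \<in> B" "f \<in> compositions B l" "g \<in> compositions (V - B) l"
      and L: "L \<in> walks_with_counts r B (counts_of_degrees r f g)" by blast
    have "set L = V"
      using set_walks_with_counts[OF L] count_profile_counts_of_degrees[OF V rfg]
      by (simp add: count_profile_def)
    then show "L \<in> ?W" using L by (simp add: walks_with_counts_def)
  qed
qed

lemma counts_of_degrees_inj:
  assumes "f \<in> compositions B l" "g \<in> compositions W l" "f' \<in> compositions B l" "g' \<in> compositions W l"
    and "B \<inter> W = {}" and eq: "counts_of_degrees r f g = counts_of_degrees r f' g'"
  shows "f = f'" "g = g'"
proof -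
  have "f v = f' v \<and> g v = g' v" for v
    using assms(1-5) fun_cong[OF eq, of v] by (cases "v \<in> B"; cases "v \<in> W")
      (auto simp: compositions_def counts_of_degrees_def)
  then show "f = f'" "g = g'" by auto
qed

lemma card_tree_walks_black:
  assumes V: "finite V" "card V = Suc l" "B \<subseteq> V" and l: "1 \<le> l"
  shows "card {L. tree_walk L \<and> set L = V \<and> even_entries L = B} =
    fact (card (V - B) - 1) * fact (card B - 1) * l * card (compositions B l \<times> compositions (V - B) l)"
proof -
  define C where "C = compositions B l \<times> compositions (V - B) l"
  define K :: nat where "K = fact (card (V - B) - 1) * fact (card B - 1)"
  have finB: "finite B" using V by (auto intro: finite_subset)
  then have fin: "finite B" "finite C" using V(1) by (simp_all add: C_def finite_compositions)
  define A where "A = (\<lambda>(r, f, g). walks_with_counts r B (counts_of_degrees r f g))"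
  have disjoint: "A p \<inter> A q = {}" if "p \<in> B \<times> C" "q \<in> B \<times> C" "p \<noteq> q" for p q
  proof -
    obtain r f g r' f' g' where pq: "p = (r, f, g)" "q = (r', f', g')" by (cases p, cases q) auto
    have "r = r' \<and> counts_of_degrees r f g = counts_of_degrees r' f' g'" if "L \<in> A p" "L \<in> A q" for L
      using that pq unfolding A_def walks_with_counts_def by auto
    then show ?thesis
      using counts_of_degrees_inj[of f B l g "V - B" f' g' r] that pq by (auto simp: C_def)
  qed
  have finite_A: "finite (A p)" if p_in: "p \<in> B \<times> C" for p
  proof -
    obtain r f g where p: "p = (r, f, g)" "r \<in> B" "f \<in> compositions B l" "g \<in> compositions (V - B) l"
      using p_in by (cases p) (auto simp: C_def)
    then have "count_profile V B (counts_of_degrees r f g) l"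
      by (intro count_profile_counts_of_degrees[OF V])
    then have "finite {v. counts_of_degrees r f g v \<noteq> 0}" unfolding count_profile_def
      by (elim conjE) simp
    then show ?thesis using p(1) finite_walks_with_counts by (simp add: A_def)
  qed
  have summand: "card (walks_with_counts r B (counts_of_degrees r f g)) = K * f r"
    if "r \<in> B" "(f, g) \<in> C" for r f g
  proof -
    have "g r = 0" using that by (auto simp: C_def compositions_def)
    then show ?thesis
      using card_walks_with_counts[OF count_profile_counts_of_degrees[OF V] l] that
      by (auto simp: C_def K_def counts_of_degrees_def)
  qed
  have "card {L. tree_walk L \<and> set L = V \<and> even_entries L = B} = (\<Sum>p \<in> B \<times> C. card (A p))"
    unfolding tree_walks_black_partition[OF V l, folded C_def] A_def[symmetric]
    using fin disjoint finite_A by (intro card_UN_disjoint) auto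
  also have "\<dots> = (\<Sum>(r, f, g) \<in> B \<times> C. K * f r)"
    using summand by (intro sum.cong) (auto simp: A_def)
  also have "\<dots> = (\<Sum>r\<in>B. \<Sum>(f, g)\<in>C. K * f r)" by (simp add: sum.cartesian_product)
  also have "\<dots> = (\<Sum>(f, g)\<in>C. K * sum f B)"
    by (subst sum.swap) (simp add: sum_distrib_left case_prod_beta)
  also have "\<dots> = (\<Sum>(f, g)\<in>C. K * l)"
    by (intro sum.cong) (auto simp: C_def compositions_def)
  finally show ?thesis by (simp add: C_def K_def)
qed

lemma edges_conv_closed_walk:
  assumes "T \<noteq> []" "e < length T"
  shows "edge_tail T e = (T @ [hd T]) ! e" "edge_head T e = (T @ [hd T]) ! Suc e"
  using assms by (auto simp: edge_tail_def edge_head_def nth_append hd_conv_nth mod_Suc)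

lemma balanced_iff_balanced_walk:
  assumes T: "T \<noteq> []"
  shows "balanced T \<longleftrightarrow> balanced_walk (T @ [hd T])"
proof -
  have "(\<sigma> e < length T \<and> \<sigma> e \<noteq> e \<and> \<sigma> (\<sigma> e) = e \<and>
      edge_head T e = edge_tail T (\<sigma> e) \<and> edge_tail T e = edge_head T (\<sigma> e)) \<longleftrightarrow>
    (\<sigma> e < length T \<and> \<sigma> e \<noteq> e \<and> \<sigma> (\<sigma> e) = e \<and>
      (T @ [hd T]) ! Suc e = (T @ [hd T]) ! \<sigma> e \<and> (T @ [hd T]) ! e = (T @ [hd T]) ! Suc (\<sigma> e))"
    if "e < length T" for \<sigma> e
    using edges_conv_closed_walk[OF T that] edges_conv_closed_walk[OF T, of "\<sigma> e"] by auto
  then show ?thesis unfolding balanced_def balanced_walk_def reversal_pairing_def by simp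
qed

lemma black_eq_even_entries:
  assumes T: "T \<noteq> []"
  shows "black T = even_entries (T @ [hd T])"
proof
  show "black T \<subseteq> even_entries (T @ [hd T])"
    unfolding black_def even_entries_def by (force simp: nth_append)
  show "even_entries (T @ [hd T]) \<subseteq> black T"
  proof
    fix x assume "x \<in> even_entries (T @ [hd T])"
    then obtain t where t: "t < length (T @ [hd T])" "even t" "x = (T @ [hd T]) ! t"
      unfolding even_entries_def by blast
    show "x \<in> black T"
    proof (cases "t < length T")
      case True
      then show ?thesis using t unfolding black_def by (force simp: nth_append)
    next
      case False
      then have "x = T ! 0" using t T by (simp add: nth_append hd_conv_nth)
      then show ?thesis using T unfolding black_def by force
    qed
  qed
qed

lemma set_close_walk: "T \<noteq> [] \<Longrightarrow> set (T @ [hd T]) = set T"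
  by (simp add: insert_absorb)

lemma bij_betw_close_walk:
  assumes V: "card V = l + 1" and l: "1 \<le> l"
  shows "bij_betw (\<lambda>T. T @ [hd T]) {T \<in> balanced_trees V l. black T = B}
    {L. tree_walk L \<and> set L = V \<and> even_entries L = B}" (is "bij_betw _ ?T ?L")
proof (rule bij_betw_byWitness[where f' = butlast])
  show "\<forall>T\<in>?T. butlast (T @ [hd T]) = T" by simp
  show "(\<lambda>T. T @ [hd T]) ` ?T \<subseteq> ?L"
  proof
    fix L assume "L \<in> (\<lambda>T. T @ [hd T]) ` ?T"
    then obtain T where T: "T \<in> balanced_trees V l" "black T = B" and L: "L = T @ [hd T]" by blast
    then have T': "length T = 2 * l" "set T = V" "balanced T"
      by (auto simp: balanced_trees_def circuits_def)
    then have ne: "T \<noteq> []" using l by auto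
    then show "L \<in> ?L" unfolding L
      using T' T(2) V balanced_iff_balanced_walk[OF ne] black_eq_even_entries[OF ne] set_close_walk[OF ne]
      by (simp add: tree_walk_def)
  qed
  have closed: "L = butlast L @ [hd (butlast L)]" "butlast L \<noteq> []" if "L \<in> ?L" for L
  proof -
    have len: "length L = Suc (2 * l)" and hd: "hd L = last L"
      using that V by (auto simp: tree_walk_def)
    then show ne: "butlast L \<noteq> []" using l by (simp flip: length_greater_0_conv)
    have "L = butlast L @ [last L]" using len by (simp flip: length_greater_0_conv)
    also have "last L = hd (butlast L)"
      using hd_append2[OF ne, of "[last L]"] calculation hd by simp
    finally show "L = butlast L @ [hd (butlast L)]" .
  qed
  then show "\<forall>L\<in>?L. butlast L @ [hd (butlast L)] = L" by simp
  show "butlast ` ?L \<subseteq> ?T"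
  proof
    fix T assume "T \<in> butlast ` ?L"
    then obtain L where L: "L \<in> ?L" and T: "T = butlast L" by blast
    note L_eq = closed(1)[OF L, folded T] and ne = closed(2)[OF L, folded T]
    have "length T = 2 * l" using L V by (auto simp: T tree_walk_def)
    moreover have "set T = V" using L set_close_walk[OF ne] L_eq by auto
    moreover have "balanced T" "black T = B"
      using L L_eq balanced_iff_balanced_walk[OF ne] black_eq_even_entries[OF ne]
      by (auto simp: tree_walk_def)
    ultimately show "T \<in> ?T" using l by (simp add: balanced_trees_def circuits_def)
  qed
qed

lemma compositions_empty: "0 < n \<Longrightarrow> compositions {} n = {}"
  by (auto simp: compositions_def)

lemma fact_choose_product:
  assumes "b + w = Suc l" "1 \<le> b" "1 \<le> w"
  shows "fact (w - 1) * fact (b - 1) * l * (((l - 1) choose (b - 1)) * ((l - 1) choose (w - 1))) =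
    (fact l * ((l - 1) choose (b - 1)) :: nat)"
proof -
  have "l - 1 - (w - 1) = b - 1" using assms by simp
  then have "fact (w - 1) * fact (b - 1) * ((l - 1) choose (w - 1)) = (fact (l - 1) :: nat)"
    using binomial_fact_lemma[of "w - 1" "l - 1"] assms by simp
  moreover have "l * fact (l - 1) = (fact l :: nat)" using assms by (cases l) auto
  moreover have "fact (w - 1) * fact (b - 1) * l * (((l - 1) choose (b - 1)) * ((l - 1) choose (w - 1))) =
      l * (fact (w - 1) * fact (b - 1) * ((l - 1) choose (w - 1))) * ((l - 1) choose (b - 1))"
    by (simp only: ac_simps)
  ultimately show ?thesis by simp
qed

lemma card_black_tree_walks_closed_form:
  assumes V: "finite V" "card V = l + 1" "B \<subseteq> V" and l: "1 \<le> l"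
  shows "fact (card (V - B) - 1) * fact (card B - 1) * l *
      card (compositions B l \<times> compositions (V - B) l) =
    (if card B = 0 \<or> card B = l + 1 then 0 else fact l * ((l - 1) choose (card B - 1)))"
proof -
  have finB: "finite B" using V(1,3) by (rule finite_subset[rotated])
  have card_V: "card B + card (V - B) = l + 1"
    using card_Diff_subset[OF finB V(3)] card_mono[OF V(1,3)] V(2) by simp
  show ?thesis
  proof (cases "card B = 0 \<or> card B = l + 1")
    case True
    then have "B = {} \<or> V - B = {}" using finB V(1) card_V by auto
    moreover have "compositions {} l = {}" using l by (simp add: compositions_empty)
    ultimately have "compositions B l = {} \<or> compositions (V - B) l = {}" by metis
    then show ?thesis using True by auto
  next
    case False
    then have sizes: "1 \<le> card B" "1 \<le> card (V - B)" using card_V by linarith+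
    then have ne: "B \<noteq> {}" "V - B \<noteq> {}" by (metis card.empty not_one_le_zero)+
    have "card (compositions B l) = (l - 1) choose (card B - 1)"
      "card (compositions (V - B) l) = (l - 1) choose (card (V - B) - 1)"
      using card_compositions[OF finB ne(1), of "l - 1"] card_compositions[OF _ ne(2), of "l - 1"]
        V(1) l by simp_all
    then show ?thesis
      using fact_choose_product[of "card B" "card (V - B)" l] card_V sizes False
      by (simp add: card_cartesian_product)
  qed
qed

theorem lemma4p6:
  fixes V B :: "'a set" and l :: nat
  assumes "finite V" and "card V = l + 1" and "B \<subseteq> V"
  shows "card {T \<in> balanced_trees V l. black T = B} =
    (if card B = 0 \<or> card B = l + 1 then 0
     else fact l * ((l - 1) choose (card B - 1)))"
proof (cases "l = 0")
  case True
  then have "balanced_trees V l = {}" by (simp add: balanced_trees_def circuits_def)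
  moreover have "card B = 0 \<or> card B = l + 1"
    using card_mono[OF assms(1,3)] assms(2) True by linarith
  ultimately show ?thesis by simp
next
  case False
  then have l: "1 \<le> l" by simp
  have "card {T \<in> balanced_trees V l. black T = B} =
      card {L. tree_walk L \<and> set L = V \<and> even_entries L = B}"
    using bij_betw_same_card[OF bij_betw_close_walk[OF assms(2) l]] .
  also have "\<dots> = fact (card (V - B) - 1) * fact (card B - 1) * l *
      card (compositions B l \<times> compositions (V - B) l)"
    using card_tree_walks_black[OF assms(1) _ assms(3) l] assms(2) by simp
  also have "\<dots> = (if card B = 0 \<or> card B = l + 1 then 0 else fact l * ((l - 1) choose (card B - 1)))"
    using card_black_tree_walks_closed_form[OF assms l] .
  finally show ?thesis .
qed

end
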